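(* Let $C\subseteq\mathbb{F}_2^n$ be a code. Then: (1) $|C|\le 2^{\,n-\lceil 2\delta(C)/(\gamma+1)\rceil+1}$; (2) $|C|\le \dfrac{2^n}{\sum_{i=0}^t\binom ni}$, where $t$ is the largest integer with $t<\delta(C)/(\gamma+1)$; (3) if $d:=\lceil 2\delta(C)/(\gamma+1)\rceil$ satisfies $2d>n$, then $|C|\le\left\lfloor\frac{2d}{2d-n}\right\rfloor$.
   Context: Let $n\ge2$ and fix reals $0<p\le q<1/2$. Let $\gamma:=\log_{q/(1-p)}\left(\frac{p}{1-q}\right)$. For $a,b\in\{0,1\}$, $d_{ab}(y,x)=|\{i: y_i=a,\ x_i=b\}|$; discrepancy $\delta(y,x):=\gamma\,d_{10}(y,x)+d_{01}(y,x)$. A code is $C\subseteq\mathbb{F}_2^n$ with $|C|\ge2$, and $\delta(C)=\min\{\delta(x,x'):x,x'\in C,\ x\ne x'\}$. *)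

theory Defs
  imports "HOL-Analysis.Analysis"
begin

text \<open>Binary words of length n are represented as lists of booleans of length n
  (True = 1, False = 0).\<close>

definition words :: "nat \<Rightarrow> bool list set" where
  "words n = {x. length x = n}"

definition dab :: "bool \<Rightarrow> bool \<Rightarrow> bool list \<Rightarrow> bool list \<Rightarrow> nat" where
  "dab a b y x = card {i. i < length y \<and> y ! i = a \<and> x ! i = b}"

definition gamma :: "real \<Rightarrow> real \<Rightarrow> real" where
  "gamma p q = log (q / (1 - p)) (p / (1 - q))"

definition discrepancy :: "real \<Rightarrow> real \<Rightarrow> bool list \<Rightarrow> bool list \<Rightarrow> real" where
  "discrepancy p q y x = gamma p q * real (dab True False y x) + real (dab False True y x)"

definition code_discrepancy :: "real \<Rightarrow> real \<Rightarrow> bool list set \<Rightarrow> real" where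
  "code_discrepancy p q C = Min {discrepancy p q x x' | x x'. x \<in> C \<and> x' \<in> C \<and> x \<noteq> x'}"

end

theory Submission
  imports Defs
begin

text \<open>Adding the discrepancies in both directions gives \<gamma> + 1 times the Hamming
  distance, so a code of discrepancy \<delta> has minimum Hamming distance at least
  2\<delta>/(\<gamma> + 1). The three bounds are then the Singleton bound (puncturing), the
  sphere-packing bound (disjoint Hamming balls) and the Plotkin bound (double counting the
  distances column by column).\<close>

definition hamming_dist :: "'a list \<Rightarrow> 'a list \<Rightarrow> nat" where
  "hamming_dist x y = card {i. i < length x \<and> x ! i \<noteq> y ! i}"

lemma finite_words: "finite (words n)"
  unfolding words_def using finite_lists_length_eq[of "UNIV :: bool set" n] by simp

lemma card_words: "card (words n) = 2 ^ n"
  unfolding words_def using card_lists_length_eq[of "UNIV :: bool set" n] by simp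

lemma hamming_dist_sum: "hamming_dist x y = (\<Sum>i<length x. if x ! i \<noteq> y ! i then 1 else 0)"
proof -
  have "{i. i < length x \<and> x ! i \<noteq> y ! i} = {i \<in> {..<length x}. x ! i \<noteq> y ! i}" by auto
  then show ?thesis unfolding hamming_dist_def by (simp add: sum.inter_filter[symmetric])
qed

lemma card_ge_2_obtains_distinct:
  assumes "2 \<le> card A"
  obtains x y where "x \<in> A" "y \<in> A" "x \<noteq> y"
  using assms card_le_Suc0_iff_eq[of A] card.infinite[of A] by fastforce

lemma hamming_dist_Cons: "hamming_dist (a # x) (b # y) = (if a \<noteq> b then 1 else 0) + hamming_dist x y"
  unfolding hamming_dist_sum length_Cons sum.lessThan_Suc_shift by simp

lemma hamming_dist_self [simp]: "hamming_dist x x = 0"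
  by (simp add: hamming_dist_def)

lemma hamming_dist_le_length: "hamming_dist x y \<le> length x"
proof -
  have "card {i. i < length x \<and> x ! i \<noteq> y ! i} \<le> card {..<length x}" by (rule card_mono) auto
  then show ?thesis unfolding hamming_dist_def by simp
qed

lemma hamming_dist_pos:
  assumes "length x = length y" "x \<noteq> y"
  shows "0 < hamming_dist x y"
proof -
  obtain i where "i < length x" "x ! i \<noteq> y ! i" using assms nth_equalityI by blast
  then show ?thesis unfolding hamming_dist_def by (auto simp: card_gt_0_iff)
qed

lemma hamming_dist_sym: "length x = length y \<Longrightarrow> hamming_dist x y = hamming_dist y x"
  unfolding hamming_dist_def by metis

lemma hamming_dist_triangle:
  assumes "length x = length y" "length y = length z"
  shows "hamming_dist x z \<le> hamming_dist x y + hamming_dist y z"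
proof -
  have "hamming_dist x z \<le> (\<Sum>i<length x. (if x ! i \<noteq> y ! i then 1 else 0) + (if y ! i \<noteq> z ! i then 1 else 0))"
    unfolding hamming_dist_sum by (rule sum_mono) auto
  also have "\<dots> = hamming_dist x y + hamming_dist y z"
    using assms by (simp add: hamming_dist_sum sum.distrib)
  finally show ?thesis .
qed

lemma hamming_dist_take_eq:
  assumes "take k x = take k y"
  shows "hamming_dist x y \<le> length x - k"
proof -
  have "{i. i < length x \<and> x ! i \<noteq> y ! i} \<subseteq> {k..<length x}"
  proof
    fix i assume i: "i \<in> {i. i < length x \<and> x ! i \<noteq> y ! i}"
    have "\<not> i < k" using i assms by (metis (mono_tags) mem_Collect_eq nth_take)
    then show "i \<in> {k..<length x}" using i by auto
  qed
  then show ?thesis unfolding hamming_dist_def by (metis card_atLeastLessThan card_mono finite_atLeastLessThan)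
qed

lemma dab_swap: "length x = length y \<Longrightarrow> dab True False y x = dab False True x y"
  unfolding dab_def by metis

lemma dab_add_dab:
  assumes "length x = length y"
  shows "dab True False x y + dab False True x y = hamming_dist x y"
proof -
  have "{i. i < length x \<and> x ! i \<noteq> y ! i}
      = {i. i < length x \<and> x ! i = True \<and> y ! i = False} \<union> {i. i < length x \<and> x ! i = False \<and> y ! i = True}"
    by auto
  moreover have "card ({i. i < length x \<and> x ! i = True \<and> y ! i = False} \<union> {i. i < length x \<and> x ! i = False \<and> y ! i = True})
     = card {i. i < length x \<and> x ! i = True \<and> y ! i = False} + card {i. i < length x \<and> x ! i = False \<and> y ! i = True}"
    by (rule card_Un_disjoint) auto
  ultimately show ?thesis using assms unfolding dab_def hamming_dist_def by simp
qed

lemma discrepancy_add_swap: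
  assumes "length x = length y"
  shows "discrepancy p q x y + discrepancy p q y x = (gamma p q + 1) * real (hamming_dist x y)"
proof -
  have h: "real (dab True False x y) + real (dab False True x y) = real (hamming_dist x y)"
    using dab_add_dab[OF assms] by (metis of_nat_add)
  have "discrepancy p q x y + discrepancy p q y x
      = (gamma p q + 1) * (real (dab True False x y) + real (dab False True x y))"
    unfolding discrepancy_def using dab_swap[OF assms] dab_swap[OF assms[symmetric]]
    by (simp add: algebra_simps)
  then show ?thesis by (simp only: h)
qed

lemma discrepancy_pos:
  assumes "0 < gamma p q" "length x = length y" "x \<noteq> y"
  shows "0 < discrepancy p q x y"
proof -
  have "0 < dab True False x y \<or> 0 < dab False True x y"
    using dab_add_dab[OF assms(2)] hamming_dist_pos[OF assms(2,3)] by linarith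
  then show ?thesis unfolding discrepancy_def using assms(1) by (auto intro: add_pos_nonneg add_nonneg_pos)
qed

lemma gamma_pos:
  assumes "0 < p" "0 < q" "p + q < 1"
  shows "0 < gamma p q"
proof -
  have "ln (p / (1 - q)) < 0" "ln (q / (1 - p)) < 0" using assms by simp_all
  then show ?thesis unfolding gamma_def log_def by (simp add: divide_neg_neg)
qed

lemma finite_discrepancies:
  "finite C \<Longrightarrow> finite {discrepancy p q x x' | x x'. x \<in> C \<and> x' \<in> C \<and> x \<noteq> x'}"
  by (rule finite_subset[of _ "(\<lambda>(x, x'). discrepancy p q x x') ` (C \<times> C)"]) auto

lemma code_discrepancy_le:
  assumes "finite C" "x \<in> C" "y \<in> C" "x \<noteq> y"
  shows "code_discrepancy p q C \<le> discrepancy p q x y"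
  unfolding code_discrepancy_def using assms by (intro Min_le finite_discrepancies) auto

lemma code_discrepancy_attained:
  assumes "2 \<le> card C"
  obtains x y where "x \<in> C" "y \<in> C" "x \<noteq> y" "code_discrepancy p q C = discrepancy p q x y"
proof -
  let ?S = "{discrepancy p q x x' | x x'. x \<in> C \<and> x' \<in> C \<and> x \<noteq> x'}"
  have "finite ?S" using assms by (intro finite_discrepancies card_ge_0_finite) simp
  moreover obtain x y where "x \<in> C" "y \<in> C" "x \<noteq> y"
    using assms by (rule card_ge_2_obtains_distinct)
  then have "?S \<noteq> {}" by blast
  ultimately have "code_discrepancy p q C \<in> ?S" unfolding code_discrepancy_def by (rule Min_in)
  then show ?thesis using that by blast
qed

lemma code_discrepancy_pos:
  assumes "0 < gamma p q" "C \<subseteq> words n" "2 \<le> card C"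
  shows "0 < code_discrepancy p q C"
proof -
  obtain x y where "x \<in> C" "y \<in> C" "x \<noteq> y" "code_discrepancy p q C = discrepancy p q x y"
    using assms(3) by (rule code_discrepancy_attained)
  moreover have "length x = length y" using \<open>x \<in> C\<close> \<open>y \<in> C\<close> assms(2) by (auto simp: words_def)
  ultimately show ?thesis using discrepancy_pos[OF assms(1)] by simp
qed

lemma hamming_dist_ge_code_discrepancy:
  assumes "0 < gamma p q + 1" "C \<subseteq> words n" "x \<in> C" "y \<in> C" "x \<noteq> y"
  shows "2 * code_discrepancy p q C / (gamma p q + 1) \<le> real (hamming_dist x y)"
proof -
  have "2 * code_discrepancy p q C \<le> discrepancy p q x y + discrepancy p q y x"
    using code_discrepancy_le[OF finite_subset[OF assms(2) finite_words]] assms(3-5)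
    by (metis add_mono mult_2)
  also have "\<dots> = (gamma p q + 1) * real (hamming_dist x y)"
    using assms(2-4) by (intro discrepancy_add_swap) (auto simp: words_def)
  finally show ?thesis using assms(1) by (simp add: divide_le_eq mult.commute)
qed

lemma card_le_singleton:
  assumes C: "C \<subseteq> words n" and "1 \<le> d"
    and dist: "\<And>x y. x \<in> C \<Longrightarrow> y \<in> C \<Longrightarrow> x \<noteq> y \<Longrightarrow> d \<le> hamming_dist x y"
  shows "card C \<le> 2 ^ (n + 1 - d)"
proof -
  define k where "k = n + 1 - d"
  have "inj_on (take k) C"
  proof (rule inj_onI, rule ccontr)
    fix x y assume xy: "x \<in> C" "y \<in> C" "take k x = take k y" "x \<noteq> y"
    then have "hamming_dist x y \<le> n - k"
      using C hamming_dist_take_eq[of k x y] by (auto simp: words_def)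
    then show False using dist[OF xy(1,2,4)] \<open>1 \<le> d\<close> unfolding k_def by linarith
  qed
  moreover have "take k ` C \<subseteq> words k" using C \<open>1 \<le> d\<close> unfolding words_def k_def by auto
  ultimately show ?thesis
    using card_mono[OF finite_words] card_image card_words unfolding k_def by metis
qed

lemma card_le_singleton_powr:
  fixes d :: int
  assumes C: "C \<subseteq> words n" "2 \<le> card C" and "1 \<le> d"
    and dist: "\<And>x y. x \<in> C \<Longrightarrow> y \<in> C \<Longrightarrow> x \<noteq> y \<Longrightarrow> d \<le> int (hamming_dist x y)"
  shows "real (card C) \<le> 2 powr (real n - of_int d + 1)"
proof -
  obtain x y where xy: "x \<in> C" "y \<in> C" "x \<noteq> y"
    using C(2) by (rule card_ge_2_obtains_distinct)
  then have "d \<le> int n"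
    using dist[OF xy] hamming_dist_le_length[of x y] C(1) by (auto simp: words_def)
  have "card C \<le> 2 ^ (n + 1 - nat d)"
    using card_le_singleton[OF C(1), of "nat d"] \<open>1 \<le> d\<close> dist by fastforce
  then have "real (card C) \<le> 2 ^ (n + 1 - nat d)"
    by (metis of_nat_le_iff of_nat_numeral of_nat_power)
  also have "\<dots> = 2 powr real (n + 1 - nat d)" by (simp add: powr_realpow)
  also have "real (n + 1 - nat d) = real n - of_int d + 1"
    using \<open>1 \<le> d\<close> \<open>d \<le> int n\<close> by (simp add: of_nat_diff)
  finally show ?thesis .
qed

definition hamming_ball :: "bool list \<Rightarrow> nat \<Rightarrow> bool list set" where
  "hamming_ball x t = {y. length y = length x \<and> hamming_dist x y \<le> t}"

lemma card_hamming_sphere: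
  fixes x :: "bool list"
  shows "card {y. length y = length x \<and> hamming_dist x y = k} = length x choose k"
proof (induction x arbitrary: k)
  case Nil
  show ?case by (cases k) (auto simp: hamming_dist_def)
next
  case (Cons a xs)
  define S where "S j = {ys. length ys = length xs \<and> hamming_dist xs ys = j}" for j
  have inj: "inj ((#) b)" for b :: bool by simp
  show ?case
  proof (cases k)
    case 0
    have "{y. length y = length (a # xs) \<and> hamming_dist (a # xs) y = k} = (#) a ` S 0"
      unfolding S_def 0 by (auto simp: length_Suc_conv hamming_dist_Cons split: if_splits)
    then show ?thesis using Cons.IH[of 0] unfolding S_def 0 by (simp add: card_image inj)
  next
    case (Suc j)
    have "{y. length y = length (a # xs) \<and> hamming_dist (a # xs) y = k} = (#) a ` S k \<union> (#) (\<not> a) ` S j"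
      unfolding S_def Suc by (auto simp: length_Suc_conv hamming_dist_Cons split: if_splits)
    moreover have "card ((#) a ` S k \<union> (#) (\<not> a) ` S j) = card ((#) a ` S k) + card ((#) (\<not> a) ` S j)"
      by (rule card_Un_disjoint)
        (auto simp: S_def intro!: finite_imageI finite_lists_length_eq[of UNIV, simplified])
    ultimately show ?thesis using Cons.IH[of k] Cons.IH[of j] unfolding S_def Suc
      by (simp add: card_image inj)
  qed
qed

lemma finite_hamming_ball: "finite (hamming_ball x t)"
  unfolding hamming_ball_def
  by (rule rev_finite_subset[OF finite_lists_length_eq[of UNIV "length x", simplified]]) auto

lemma card_hamming_ball: "card (hamming_ball x t) = (\<Sum>i=0..t. length x choose i)"
proof (induction t)
  case 0
  then show ?case using card_hamming_sphere[of x 0] by (simp add: hamming_ball_def)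
next
  case (Suc t)
  have "hamming_ball x (Suc t) = hamming_ball x t \<union> {y. length y = length x \<and> hamming_dist x y = Suc t}"
    by (auto simp: hamming_ball_def)
  moreover have "card (hamming_ball x t \<union> {y. length y = length x \<and> hamming_dist x y = Suc t}) =
     card (hamming_ball x t) + card {y. length y = length x \<and> hamming_dist x y = Suc t}"
    by (rule card_Un_disjoint)
      (auto simp: finite_hamming_ball hamming_ball_def
        intro: rev_finite_subset[OF finite_hamming_ball[of x "Suc t"]])
  ultimately show ?case using Suc card_hamming_sphere[of x "Suc t"] by simp
qed

lemma hamming_balls_disjoint:
  assumes "length x = length y" "2 * t < hamming_dist x y"
  shows "hamming_ball x t \<inter> hamming_ball y t = {}"
proof (rule ccontr)
  assume "hamming_ball x t \<inter> hamming_ball y t \<noteq> {}"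
  then obtain z where z: "z \<in> hamming_ball x t" "z \<in> hamming_ball y t" by blast
  then have "hamming_dist x y \<le> hamming_dist x z + hamming_dist z y"
    using assms(1) by (intro hamming_dist_triangle) (auto simp: hamming_ball_def)
  also have "hamming_dist z y = hamming_dist y z"
    using z assms(1) by (intro hamming_dist_sym) (auto simp: hamming_ball_def)
  finally show False using z assms(2) by (auto simp: hamming_ball_def)
qed

lemma card_le_sphere_packing:
  assumes C: "C \<subseteq> words n"
    and dist: "\<And>x y. x \<in> C \<Longrightarrow> y \<in> C \<Longrightarrow> x \<noteq> y \<Longrightarrow> 2 * t < hamming_dist x y"
  shows "real (card C) \<le> 2 ^ n / (\<Sum>i=0..t. real (n choose i))"
proof -
  have fC: "finite C" using C(1) finite_words by (rule finite_subset)
  have len: "length x = n" if "x \<in> C" for x using that C by (auto simp: words_def)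
  have "card C * (\<Sum>i=0..t. n choose i) = (\<Sum>x\<in>C. card (hamming_ball x t))"
    using len by (simp add: card_hamming_ball)
  also have "\<dots> = card (\<Union>x\<in>C. hamming_ball x t)"
    using fC len dist hamming_balls_disjoint
    by (intro card_UN_disjoint[symmetric]) (auto simp: finite_hamming_ball)
  also have "\<dots> \<le> card (words n)"
    using len by (intro card_mono[OF finite_words]) (auto simp: hamming_ball_def words_def)
  finally have "real (card C) * (\<Sum>i=0..t. real (n choose i)) \<le> 2 ^ n"
    unfolding card_words by (metis of_nat_le_iff of_nat_mult of_nat_numeral of_nat_power of_nat_sum)
  moreover have "0 < (\<Sum>i=0..t. real (n choose i))" by (rule sum_pos2[of _ 0]) auto
  ultimately show ?thesis by (simp add: pos_le_divide_eq)
qed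

lemma sum_hamming_dist_le:
  assumes C: "C \<subseteq> words n"
  shows "(\<Sum>x\<in>C. \<Sum>y\<in>C. real (hamming_dist x y)) \<le> real n * real (card C) ^ 2 / 2"
proof -
  define M where "M = real (card C)"
  define u where "u x i = (if x ! i then 1 else 0 :: real)" for x :: "bool list" and i
  have hamming: "real (hamming_dist x y) = (\<Sum>i<n. u x i + u y i - 2 * u x i * u y i)"
    if "x \<in> C" for x y
  proof -
    have "length x = n" using that C by (auto simp: words_def)
    then show ?thesis unfolding hamming_dist_sum u_def of_nat_sum by (intro sum.cong) auto
  qed
  have column: "(\<Sum>x\<in>C. \<Sum>y\<in>C. u x i + u y i - 2 * u x i * u y i) \<le> M ^ 2 / 2" for i
  proof -
    define w where "w = (\<Sum>x\<in>C. u x i)"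
    \<comment> \<open>w codewords have a 1 in column i, so 2w(M - w) ordered pairs differ there\<close>
    have "(\<Sum>x\<in>C. \<Sum>y\<in>C. u x i + u y i - 2 * u x i * u y i) = 2 * w * (M - w)"
      by (simp add: sum.distrib sum_subtractf sum_distrib_left sum_distrib_right w_def M_def
          algebra_simps)
    also have "\<dots> \<le> M ^ 2 / 2"
      using zero_le_power2[of "M - 2 * w"] by (simp add: power2_eq_square algebra_simps)
    finally show ?thesis .
  qed
  have "(\<Sum>x\<in>C. \<Sum>y\<in>C. real (hamming_dist x y)) = (\<Sum>i<n. \<Sum>x\<in>C. \<Sum>y\<in>C. u x i + u y i - 2 * u x i * u y i)"
    by (simp add: hamming sum.swap[of _ "{..<n}"] cong: sum.cong)
  also have "\<dots> \<le> real n * M ^ 2 / 2"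
    using sum_mono[of "{..<n}", OF column] by simp
  finally show ?thesis unfolding M_def .
qed

lemma card_le_plotkin:
  fixes d :: int
  assumes C: "C \<subseteq> words n" "C \<noteq> {}" and "int n < 2 * d"
    and dist: "\<And>x y. x \<in> C \<Longrightarrow> y \<in> C \<Longrightarrow> x \<noteq> y \<Longrightarrow> d \<le> int (hamming_dist x y)"
  shows "real (card C) \<le> of_int \<lfloor>real_of_int (2 * d) / real_of_int (2 * d - int n)\<rfloor>"
proof -
  define M where "M = real (card C)"
  have fC: "finite C" using C(1) finite_words by (rule finite_subset)
  then have M0: "0 < M" using C(2) by (simp add: M_def card_gt_0_iff)
  have "(M - 1) * d \<le> (\<Sum>y\<in>C. real (hamming_dist x y))" if "x \<in> C" for x
  proof -
    have "(M - 1) * d = (\<Sum>y\<in>C - {x}. of_int d)"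
      using fC that M0 by (simp add: M_def card_Diff_singleton of_nat_diff)
    also have "\<dots> \<le> (\<Sum>y\<in>C - {x}. real (hamming_dist x y))"
      using dist that by (intro sum_mono) (metis DiffE insertI1 of_int_le_iff of_int_of_nat_eq)
    also have "\<dots> = (\<Sum>y\<in>C. real (hamming_dist x y))" using fC that by (simp add: sum.remove)
    finally show ?thesis .
  qed
  then have "M * ((M - 1) * d) \<le> (\<Sum>x\<in>C. \<Sum>y\<in>C. real (hamming_dist x y))"
    using sum_mono[of C "\<lambda>x. (M - 1) * d"] by (simp add: M_def)
  also have "\<dots> \<le> M * (real n * M / 2)"
    using sum_hamming_dist_le[OF C(1)] by (simp add: M_def power2_eq_square mult_ac)
  finally have "(M - 1) * d \<le> real n * M / 2" using M0 by (simp add: mult_le_cancel_left_pos)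
  then have "M * (2 * d - real n) \<le> 2 * d" by (simp add: algebra_simps)
  then have "M \<le> real_of_int (2 * d) / real_of_int (2 * d - int n)"
    using \<open>int n < 2 * d\<close> by (simp add: pos_le_divide_eq)
  then show ?thesis unfolding M_def by (metis le_floor_iff of_int_of_nat_eq of_int_le_iff)
qed

theorem mainTheorem12:
  fixes n :: nat and p q :: real and C :: "bool list set"
  assumes hn: "n \<ge> 2"
    and hp: "0 < p" and hpq: "p \<le> q" and hq: "q < 1/2"
    and hC: "C \<subseteq> words n" and hC2: "card C \<ge> 2"
  shows "real (card C) \<le> 2 powr (real n - of_int \<lceil>2 * code_discrepancy p q C / (gamma p q + 1)\<rceil> + 1)
    \<and> (\<forall>t::int. t < code_discrepancy p q C / (gamma p q + 1) \<and>
           (\<forall>s::int. s < code_discrepancy p q C / (gamma p q + 1) \<longrightarrow> s \<le> t) \<longrightarrow>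
           real (card C) \<le> 2 ^ n / (\<Sum>i=0..nat t. real (n choose i)))
    \<and> (let d = \<lceil>2 * code_discrepancy p q C / (gamma p q + 1)\<rceil> in 2 * d > int n \<longrightarrow>
           real (card C) \<le> of_int \<lfloor>real_of_int (2 * d) / real_of_int (2 * d - int n)\<rfloor>)"
proof -
  define G where "G = gamma p q"
  define \<delta> where "\<delta> = code_discrepancy p q C"
  have G: "0 < G" unfolding G_def using hp hpq hq by (intro gamma_pos) auto
  have \<delta>: "0 < \<delta>" unfolding \<delta>_def using G hC hC2 by (intro code_discrepancy_pos) (auto simp: G_def)
  have dist: "2 * \<delta> / (G + 1) \<le> real (hamming_dist x y)" if "x \<in> C" "y \<in> C" "x \<noteq> y" for x y
    unfolding G_def \<delta>_def using G hC that by (intro hamming_dist_ge_code_discrepancy) (auto simp: G_def)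
  then have dist_ceiling: "\<lceil>2 * \<delta> / (G + 1)\<rceil> \<le> int (hamming_dist x y)" if "x \<in> C" "y \<in> C" "x \<noteq> y" for x y
    using that by (simp add: ceiling_le_iff)
  have "1 \<le> \<lceil>2 * \<delta> / (G + 1)\<rceil>" using G \<delta> by simp
  have sphere_packing: "real (card C) \<le> 2 ^ n / (\<Sum>i=0..nat t. real (n choose i))"
    if "t < \<delta> / (G + 1)" "\<forall>s::int. s < \<delta> / (G + 1) \<longrightarrow> s \<le> t" for t :: int
  proof (rule card_le_sphere_packing[OF hC])
    have "0 \<le> t" using that(2) G \<delta> by auto
    moreover have "2 * t < 2 * \<delta> / (G + 1)" using that(1) G by (simp add: field_simps)
    ultimately show "2 * nat t < hamming_dist x y" if "x \<in> C" "y \<in> C" "x \<noteq> y" for x y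
      using dist[OF that] by linarith
  qed
  have "C \<noteq> {}" using hC2 by auto
  show ?thesis
    unfolding G_def[symmetric] \<delta>_def[symmetric] Let_def
  proof (intro conjI allI impI)
    show "real (card C) \<le> 2 powr (real n - of_int \<lceil>2 * \<delta> / (G + 1)\<rceil> + 1)"
      by (rule card_le_singleton_powr[OF hC hC2 \<open>1 \<le> _\<close> dist_ceiling])
    show "real (card C) \<le> of_int \<lfloor>real_of_int (2 * \<lceil>2 * \<delta> / (G + 1)\<rceil>) /
        real_of_int (2 * \<lceil>2 * \<delta> / (G + 1)\<rceil> - int n)\<rfloor>"
      if "int n < 2 * \<lceil>2 * \<delta> / (G + 1)\<rceil>"
      by (rule card_le_plotkin[OF hC \<open>C \<noteq> {}\<close> that dist_ceiling])
  qed (use sphere_packing in blast)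
qed

end
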